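(* Let $N=\{1,\dots,n\}$ be agents and $M$ a finite set of chores, where each agent $i$ has an additive valuation $V_i$ with $V_i(\{j\})\le 0$ for all $j\in M$ and $V_i(M)=-1$, and shares $s_i\in(0,1]$ with $\sum_i s_i=1$. Let $X=\langle X_1,\dots,X_n\rangle$ be the allocation that assigns all chores of $M$ to a single agent with the largest share (ties broken arbitrarily) and nothing to all other agents. Then $V_i(X_i)\ge n\,\mathsf{WMMS}_i$ for every $i\in N$.
   Context: For agent $i$, $\mathsf{WMMS}_i:=\max_{\langle Y_1,\dots,Y_n\rangle\in\Pi(M)}\min_{k\in N}V_i(Y_k)\frac{s_i}{s_k}$, where $\Pi(M)$ is the set of ordered partitions of $M$ into $n$ possibly empty bundles (bundle $Y_k$ for agent $k$). Valuations are additive: $V_i(S)=\sum_{j\in S}V_i(\{j\})$. *)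

theory Defs
  imports Complex_Main
begin

text \<open>Agents are 1..n. A chore valuation of agent i is given by its values on single chores,
  V i j = V_i({j}); additive extension to bundles is sum (V i) S.\<close>

definition ordered_partitions :: "nat \<Rightarrow> 'c set \<Rightarrow> (nat \<Rightarrow> 'c set) set" where
  "ordered_partitions n M =
     {Y. (\<forall>k\<in>{1..n}. \<forall>l\<in>{1..n}. k \<noteq> l \<longrightarrow> Y k \<inter> Y l = {})
       \<and> (\<Union>k\<in>{1..n}. Y k) = M
       \<and> (\<forall>k. k \<notin> {1..n} \<longrightarrow> Y k = {})}"

definition WMMS :: "nat \<Rightarrow> 'c set \<Rightarrow> (nat \<Rightarrow> 'c \<Rightarrow> real) \<Rightarrow> (nat \<Rightarrow> real) \<Rightarrow> nat \<Rightarrow> real" where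
  "WMMS n M V s i =
     Max ((\<lambda>Y. Min ((\<lambda>k. sum (V i) (Y k) * (s i / s k)) ` {1..n})) ` ordered_partitions n M)"

end

theory Submission
  imports Defs "HOL-Library.FuncSet"
begin

text \<open>In every ordered partition some bundle \<open>Y\<^sub>k\<close> satisfies \<open>V\<^sub>i(Y\<^sub>k) \<le> s\<^sub>k V\<^sub>i(M)\<close>, since the
  bundle values add up to \<open>V\<^sub>i(M)\<close> and the shares add up to 1. Scaling by \<open>s\<^sub>i / s\<^sub>k\<close> gives
  \<open>WMMS\<^sub>i \<le> -s\<^sub>i\<close>. The agent with the largest share has \<open>s\<^sub>a \<ge> 1/n\<close>, so its cost \<open>-1\<close> is at least
  \<open>-n s\<^sub>a \<ge> n WMMS\<^sub>a\<close>; every other agent gets value \<open>0 \<ge> -n s\<^sub>i\<close>. Only the normalisation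
  \<open>V\<^sub>i(M) = -1\<close> is used; the signs of the single-chore values play no role.\<close>

lemma sum_ordered_partition:
  assumes "finite M" "Y \<in> ordered_partitions n M"
  shows "(\<Sum>k=1..n. sum f (Y k)) = sum f M"
proof -
  have disjoint: "\<forall>k\<in>{1..n}. \<forall>l\<in>{1..n}. k \<noteq> l \<longrightarrow> Y k \<inter> Y l = {}"
    and union: "(\<Union>k\<in>{1..n}. Y k) = M"
    using assms(2) unfolding ordered_partitions_def by auto
  have "\<forall>k\<in>{1..n}. finite (Y k)"
    using union assms(1) by (metis UN_upper finite_subset)
  then have "sum f (\<Union>k\<in>{1..n}. Y k) = (\<Sum>k=1..n. sum f (Y k))"
    using disjoint by (intro sum.UNION_disjoint) auto
  with union show ?thesis by simp
qed

lemma finite_ordered_partitions: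
  assumes "finite M"
  shows "finite (ordered_partitions n M)"
proof -
  let ?extend = "\<lambda>f k. if k \<in> {1..n} then f k else {}"
  have "ordered_partitions n M \<subseteq> ?extend ` PiE {1..n} (\<lambda>_. Pow M)"
  proof
    fix Y assume "Y \<in> ordered_partitions n M"
    then have "(\<Union>k\<in>{1..n}. Y k) = M" and "\<forall>k. k \<notin> {1..n} \<longrightarrow> Y k = {}"
      unfolding ordered_partitions_def by auto
    then have "Y = ?extend (restrict Y {1..n})" and "restrict Y {1..n} \<in> PiE {1..n} (\<lambda>_. Pow M)"
      by (auto simp: fun_eq_iff)
    then show "Y \<in> ?extend ` PiE {1..n} (\<lambda>_. Pow M)" by blast
  qed
  moreover have "finite (PiE {1..n} (\<lambda>_. Pow M))"
    using assms by (intro finite_PiE) auto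
  ultimately show ?thesis by (meson finite_imageI finite_subset)
qed

lemma ordered_partitions_nonempty:
  assumes "n \<ge> 1"
  shows "ordered_partitions n M \<noteq> {}"
proof -
  have "(\<lambda>k. if k = 1 then M else {}) \<in> ordered_partitions n M"
    using assms unfolding ordered_partitions_def by (auto split: if_splits)
  then show ?thesis by blast
qed

lemma ex_part_le_share:
  fixes s :: "nat \<Rightarrow> real"
  assumes "finite M" "Y \<in> ordered_partitions n M" "n \<ge> 1" "(\<Sum>k=1..n. s k) = 1"
  shows "\<exists>k\<in>{1..n}. sum f (Y k) \<le> s k * sum f M"
proof (rule ccontr)
  assume "\<not> ?thesis"
  then have "(\<Sum>k=1..n. s k * sum f M) < (\<Sum>k=1..n. sum f (Y k))"
    using assms(3) by (intro sum_strict_mono) (auto simp: not_le)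
  also have "\<dots> = sum f M"
    using sum_ordered_partition[OF assms(1,2)] .
  finally show False
    using assms(4) by (simp add: sum_distrib_right[symmetric])
qed

lemma WMMS_le_share:
  assumes "finite M" "n \<ge> 1" "\<forall>k\<in>{1..n}. 0 < s k" "(\<Sum>k=1..n. s k) = 1" "0 < s i"
  shows "WMMS n M V s i \<le> s i * sum (V i) M"
proof -
  have "Min ((\<lambda>k. sum (V i) (Y k) * (s i / s k)) ` {1..n}) \<le> s i * sum (V i) M"
    if Y: "Y \<in> ordered_partitions n M" for Y
  proof -
    obtain k where k: "k \<in> {1..n}" "sum (V i) (Y k) \<le> s k * sum (V i) M"
      using ex_part_le_share[OF assms(1) Y assms(2,4)] by blast
    have "0 < s k" using k(1) assms(3) by blast
    have "Min ((\<lambda>k. sum (V i) (Y k) * (s i / s k)) ` {1..n}) \<le> sum (V i) (Y k) * (s i / s k)"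
      using k(1) by (intro Min_le) auto
    also have "\<dots> \<le> s k * sum (V i) M * (s i / s k)"
      using k(2) \<open>0 < s k\<close> assms(5) by (intro mult_right_mono) auto
    also have "\<dots> = s i * sum (V i) M"
      using \<open>0 < s k\<close> by simp
    finally show ?thesis .
  qed
  then show ?thesis
    unfolding WMMS_def
    using finite_ordered_partitions[OF assms(1)] ordered_partitions_nonempty[OF assms(2)]
    by (subst Max_le_iff) auto
qed

theorem lemma2:
  fixes n :: nat and M :: "'c set" and V :: "nat \<Rightarrow> 'c \<Rightarrow> real" and s :: "nat \<Rightarrow> real"
    and X :: "nat \<Rightarrow> 'c set" and a :: nat
  assumes "finite M"
    and "\<forall>i\<in>{1..n}. \<forall>j\<in>M. V i j \<le> 0"
    and "\<forall>i\<in>{1..n}. sum (V i) M = -1"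
    and "\<forall>i\<in>{1..n}. 0 < s i \<and> s i \<le> 1"
    and "(\<Sum>i=1..n. s i) = 1"
    and "a \<in> {1..n}"
    and "\<forall>k\<in>{1..n}. s k \<le> s a"
    and "X a = M"
    and "\<forall>k\<in>{1..n}. k \<noteq> a \<longrightarrow> X k = {}"
  shows "\<forall>i\<in>{1..n}. sum (V i) (X i) \<ge> real n * WMMS n M V s i"
proof
  fix i assume i: "i \<in> {1..n}"
  have n: "n \<ge> 1" using assms(6) by auto
  have shares_pos: "\<forall>k\<in>{1..n}. 0 < s k" using assms(4) by blast
  have "WMMS n M V s i \<le> s i * sum (V i) M"
    using WMMS_le_share[OF assms(1) n shares_pos assms(5)] shares_pos i by blast
  then have "WMMS n M V s i \<le> - s i"
    using assms(3) i by simp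
  then have "real n * WMMS n M V s i \<le> real n * (- s i)"
    by (rule mult_left_mono) simp
  then have bound: "real n * WMMS n M V s i \<le> - (real n * s i)"
    by simp
  have "(\<Sum>k=1..n. s k) \<le> (\<Sum>k=1..n. s a)"
    using assms(7) by (intro sum_mono) auto
  then have "1 \<le> real n * s a"
    using assms(5) by simp
  moreover have "0 \<le> real n * s i"
    using shares_pos i by (simp add: less_imp_le)
  ultimately show "sum (V i) (X i) \<ge> real n * WMMS n M V s i"
    using bound assms(3,8,9) i by (cases "i = a") auto
qed

end
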